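(* In the M/M/1 setting below, for every belief distribution $\Lambda$ satisfying the standing assumptions, $q^S_m\le q^S_e$.
   Context: Setting: an M/M/1 queue with true (deterministic) Poisson arrival rate $\lambda>0$ and exponential service times with rate $\mu$, so the expected time in system at effective arrival rate $x\in[0,\mu)$ is $W(x)=1/(\mu-x)$. Each served customer receives reward $R$ and incurs waiting cost $C>0$ per unit time, with $R\ge C/\mu$. Customers' beliefs about the arrival rate are described by a non-degenerate nonnegative random variable $\Lambda$ whose support has minimum $\lambda_{\min}$ and maximum $\lambda_{\max}$, with $0\le\lambda_{\min}<\lambda<\lambda_{\max}<\mu$. Shared-belief quantities, for $q\in[0,1]$: the revenue rate $\mathrm{Rev}^S(q)=q\lambda\,\mathbb{E}[R-C\,W(q\Lambda)]$ (strictly concave on $[0,1]$); $q^S_m$ is the maximizer of $\mathrm{Rev}^S$ over $q\in[0,1]$. The individual (no-fee) equilibrium $q^S_e$ is defined as follows: if $R-C\,\mathbb{E}[W(\Lambda)]\ge0$ then $q^S_e=1$; otherwise $q^S_e$ is the unique $q\in[0,1]$ with $C\,\mathbb{E}[W(q\Lambda)]=R$. *)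

theory Defs
  imports "HOL-Probability.Probability"
begin

text \<open>Expected time in system of an M/M/1 queue with service rate mu at effective
  arrival rate x.\<close>
definition W :: "real \<Rightarrow> real \<Rightarrow> real" where
  "W mu x = 1 / (mu - x)"

definition msupport :: "real measure \<Rightarrow> real set" where
  "msupport M = {x. \<forall>e>0. emeasure M (ball x e) > 0}"

text \<open>Shared-belief revenue rate Rev^S(q) = q lam E[R - C W(q Lambda)], where the
  belief Lambda has distribution M.\<close>
definition Rev_S :: "real measure \<Rightarrow> real \<Rightarrow> real \<Rightarrow> real \<Rightarrow> real \<Rightarrow> real \<Rightarrow> real" where
  "Rev_S M lam mu R C q = q * lam * (\<integral>x. (R - C * W mu (q * x)) \<partial>M)"

definition is_qSm :: "real measure \<Rightarrow> real \<Rightarrow> real \<Rightarrow> real \<Rightarrow> real \<Rightarrow> real \<Rightarrow> bool" where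
  "is_qSm M lam mu R C q \<longleftrightarrow> q \<in> {0..1} \<and>
     (\<forall>q'\<in>{0..1}. Rev_S M lam mu R C q' \<le> Rev_S M lam mu R C q)"

text \<open>q is the individual (no-fee) equilibrium q^S_e.\<close>
definition is_qSe :: "real measure \<Rightarrow> real \<Rightarrow> real \<Rightarrow> real \<Rightarrow> real \<Rightarrow> bool" where
  "is_qSe M mu R C q \<longleftrightarrow>
     (if R - C * (\<integral>x. W mu x \<partial>M) \<ge> 0 then q = 1
      else q \<in> {0..1} \<and> C * (\<integral>x. W mu (q * x) \<partial>M) = R)"

end

theory Submission
  imports Defs
begin

text \<open>If some customers join beyond the equilibrium q^S_e, the expected waiting cost
  C E[W(q\<Lambda>)] exceeds the reward R because E[W(q\<Lambda>)] is strictly increasing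
  in q; the revenue would then be negative, worse than the revenue 0 of admitting
  nobody.\<close>

lemma AE_in_msupport:
  fixes M :: "real measure"
  assumes sets_M: "sets M = sets borel"
  shows "AE x in M. x \<in> msupport M"
proof -
  define I where "I = {(r, s). r \<in> \<rat> \<and> s \<in> \<rat> \<and> emeasure M (ball r s) = 0}"
  have "countable I"
    by (rule countable_subset[of _ "\<rat> \<times> \<rat>"]) (auto simp: I_def intro: countable_rat)
  then have null: "(\<Union>(r, s)\<in>I. ball r s) \<in> null_sets M"
    by (rule null_sets_UN') (auto simp: I_def null_sets_def sets_M)
  show ?thesis
  proof (rule AE_I'[OF null], safe)
    fix x assume "x \<notin> msupport M"
    then obtain e where "e > 0" and null_ball: "emeasure M (ball x e) = 0"
      by (auto simp: msupport_def not_gr_zero)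
    obtain r where r: "r \<in> \<rat>" "x < r" "r < x + e/4"
      using Rats_dense_in_real[of x "x + e/4"] \<open>e > 0\<close> by auto
    obtain s where s: "s \<in> \<rat>" "r - x < s" "s < e/2"
      using Rats_dense_in_real[of "r - x" "e/2"] r \<open>e > 0\<close> by auto
    have "ball r s \<subseteq> ball x e"
      using r s by (auto simp: dist_real_def)
    then have "emeasure M (ball r s) = 0"
      using null_ball emeasure_mono[of "ball r s" "ball x e" M] by (simp add: sets_M)
    then have "(r, s) \<in> I"
      using r s by (simp add: I_def)
    moreover have "x \<in> ball r s"
      using r s by (simp add: dist_real_def)
    ultimately show "x \<in> (\<Union>(r, s)\<in>I. ball r s)"
      by force
  qed
qed

lemma W_strict_mono:
  assumes "x < y" and "y < mu"
  shows "W mu x < W mu y"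
  using assms by (simp add: W_def frac_less2)

lemma W_mono:
  assumes "x \<le> y" and "y < mu"
  shows "W mu x \<le> W mu y"
  using assms by (simp add: W_def frac_le)

definition mean_W :: "real measure \<Rightarrow> real \<Rightarrow> real \<Rightarrow> real" where
  "mean_W M mu q = (\<integral>x. W mu (q * x) \<partial>M)"

locale bounded_belief = prob_space M for M :: "real measure" +
  fixes mu b :: real
  assumes sets_M [measurable_cong]: "sets M = sets borel"
    and AE_bounded: "AE x in M. 0 \<le> x \<and> x \<le> b"
    and b_less_mu: "b < mu"
begin

lemma scaled_le_bound:
  assumes "0 \<le> q" "q \<le> 1" "0 \<le> x" "x \<le> b"
  shows "q * x \<le> b"
  using assms mult_left_le_one_le[of x q] by linarith

lemma integrable_W_scaled:
  assumes "0 \<le> q" "q \<le> 1"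
  shows "integrable M (\<lambda>x. W mu (q * x))"
proof (rule integrable_const_bound[where B = "W mu b"])
  show "AE x in M. norm (W mu (q * x)) \<le> W mu b"
    using AE_bounded
  proof eventually_elim
    case (elim x)
    then have "q * x \<le> b"
      using assms scaled_le_bound by blast
    then show ?case
      using b_less_mu W_mono[of "q * x" b mu] by (simp add: W_def)
  qed
qed (simp add: W_def)

lemma Rev_S_eq:
  assumes "0 \<le> q" "q \<le> 1"
  shows "Rev_S M lam mu R C q = q * lam * (R - C * mean_W M mu q)"
  using integrable_W_scaled[OF assms] by (simp add: Rev_S_def mean_W_def prob_space)

lemma mean_W_strict_mono:
  assumes pos_mass: "emeasure M {0<..} \<noteq> 0"
    and "0 \<le> q" "q < q'" "q' \<le> 1"
  shows "mean_W M mu q < mean_W M mu q'"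
  unfolding mean_W_def
proof (rule integral_less_AE[where A = "{0<..}"])
  show "integrable M (\<lambda>x. W mu (q * x))" "integrable M (\<lambda>x. W mu (q' * x))"
    using assms integrable_W_scaled by auto
  show "AE x in M. x \<in> {0<..} \<longrightarrow> W mu (q * x) \<noteq> W mu (q' * x)"
    using AE_bounded
  proof eventually_elim
    case (elim x)
    have "q' * x \<le> b"
      using elim assms scaled_le_bound by auto
    then show ?case
      using assms b_less_mu W_strict_mono[of "q * x" "q' * x" mu] by auto
  qed
  show "AE x in M. W mu (q * x) \<le> W mu (q' * x)"
    using AE_bounded
  proof eventually_elim
    case (elim x)
    have "q' * x \<le> b"
      using elim assms scaled_le_bound by auto
    moreover have "q * x \<le> q' * x"
      using elim assms by (simp add: mult_right_mono)
    ultimately show ?case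
      using b_less_mu W_mono by auto
  qed
qed (use pos_mass sets_M in auto)

end

theorem proposition1:
  fixes M :: "real measure" and lam mu R C lmin lmax qm qe :: real
  assumes "prob_space M" and "sets M = sets borel"
    and "C > 0" and "R \<ge> C / mu"
    and "lmin \<in> msupport M" and "lmax \<in> msupport M"
    and "msupport M \<subseteq> {lmin..lmax}"
    and "0 \<le> lmin" and "lmin < lam" and "lam < lmax" and "lmax < mu"
    and "is_qSm M lam mu R C qm"
    and "is_qSe M mu R C qe"
  shows "qm \<le> qe"
proof -
  have "AE x in M. 0 \<le> x \<and> x \<le> lmax"
    using AE_in_msupport[OF assms(2)] by eventually_elim (use assms(7,8) in auto)
  then interpret bounded_belief M mu lmax
    using assms(1,2,11) by (simp add: bounded_belief_def bounded_belief_axioms_def)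
  have pos_mass: "emeasure M {0<..} \<noteq> 0"
  proof -
    have "emeasure M (ball lmax lmax) > 0"
      using assms(6,8-10) by (simp add: msupport_def)
    moreover have "ball lmax lmax \<subseteq> {0<..}"
      by (auto simp: dist_real_def)
    ultimately show ?thesis
      using emeasure_mono[of "ball lmax lmax" "{0<..}" M] sets_M by auto
  qed
  have qm: "qm \<in> {0..1}" and qm_max: "Rev_S M lam mu R C 0 \<le> Rev_S M lam mu R C qm"
    using assms(12) by (auto simp: is_qSm_def)
  show ?thesis
  proof (rule ccontr)
    assume "\<not> qm \<le> qe"
    with assms(13) qm have qe: "qe \<in> {0..1}" "C * mean_W M mu qe = R" "qe < qm"
      by (auto simp: is_qSe_def mean_W_def split: if_splits)
    then have "R < C * mean_W M mu qm"
      using mean_W_strict_mono[OF pos_mass, of qe qm] qm assms(3) by auto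
    moreover have "0 < qm * lam"
      using qe assms(8,9) by auto
    ultimately have "Rev_S M lam mu R C qm < 0"
      using Rev_S_eq[of qm] qm by (simp add: mult_pos_neg)
    with qm_max show False
      by (simp add: Rev_S_def)
  qed
qed

end
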